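(* If $(S,\sqcup,\cap)$ is an ado-semilattice, then $(S,\sqcup)$ is a left regular band and for all $a,b,c\in S$, $a\sqcup(b\cap c)=(a\sqcup b)\cap(a\sqcup c)$.
   Context: An o-semilattice is an algebra $(L,\cap,\sqcup)$ such that $(L,\cap)$ is a semilattice and, with $x\leq y$ iff $x=x\cap y$, for all $x,y,z$: (i) $x\leq x\sqcup y$; (ii) $(x\cap y)\sqcup(y\cap z)\leq y$; (iii) $x\sqcup y\leq x\sqcup(y\cap(x\sqcup y))$; (iv) $x\cap z\leq(x\cap y)\sqcup z$. It is distributive if $(a\cap d)\sqcup((b\cap d)\cap(c\cap d))=((a\cap d)\sqcup(b\cap d))\cap((a\cap d)\sqcup(c\cap d))$ for all $a,b,c,d$. An ado-semilattice is a distributive o-semilattice in which $\sqcup$ is associative. A left regular band is a set with a binary operation $\sqcup$ satisfying $a\sqcup(b\sqcup c)=(a\sqcup b)\sqcup c$, $a\sqcup a=a$, $a\sqcup b=(a\sqcup b)\sqcup a$. *)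

theory Defs
  imports Main
begin

definition is_semilattice :: "('a \<Rightarrow> 'a \<Rightarrow> 'a) \<Rightarrow> bool" where
  "is_semilattice m \<longleftrightarrow>
     (\<forall>x y z. m (m x y) z = m x (m y z)) \<and>
     (\<forall>x y. m x y = m y x) \<and>
     (\<forall>x. m x x = x)"

definition sl_le :: "('a \<Rightarrow> 'a \<Rightarrow> 'a) \<Rightarrow> 'a \<Rightarrow> 'a \<Rightarrow> bool" where
  "sl_le m x y \<longleftrightarrow> x = m x y"

definition o_semilattice :: "('a \<Rightarrow> 'a \<Rightarrow> 'a) \<Rightarrow> ('a \<Rightarrow> 'a \<Rightarrow> 'a) \<Rightarrow> bool" where
  "o_semilattice m j \<longleftrightarrow>
     is_semilattice m \<and>
     (\<forall>x y. sl_le m x (j x y)) \<and>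
     (\<forall>x y z. sl_le m (j (m x y) (m y z)) y) \<and>
     (\<forall>x y. sl_le m (j x y) (j x (m y (j x y)))) \<and>
     (\<forall>x y z. sl_le m (m x z) (j (m x y) z))"

definition distributive_o_semilattice :: "('a \<Rightarrow> 'a \<Rightarrow> 'a) \<Rightarrow> ('a \<Rightarrow> 'a \<Rightarrow> 'a) \<Rightarrow> bool" where
  "distributive_o_semilattice m j \<longleftrightarrow>
     o_semilattice m j \<and>
     (\<forall>a b c d. j (m a d) (m (m b d) (m c d)) =
                m (j (m a d) (m b d)) (j (m a d) (m c d)))"

definition ado_semilattice :: "('a \<Rightarrow> 'a \<Rightarrow> 'a) \<Rightarrow> ('a \<Rightarrow> 'a \<Rightarrow> 'a) \<Rightarrow> bool" where
  "ado_semilattice m j \<longleftrightarrow>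
     distributive_o_semilattice m j \<and> (\<forall>x y z. j (j x y) z = j x (j y z))"

definition left_regular_band :: "('a \<Rightarrow> 'a \<Rightarrow> 'a) \<Rightarrow> bool" where
  "left_regular_band j \<longleftrightarrow>
     (\<forall>a b c. j a (j b c) = j (j a b) c) \<and>
     (\<forall>a. j a a = a) \<and>
     (\<forall>a b. j a b = j (j a b) a)"

end

theory Submission
  imports Defs
begin

(*
  Axioms (i), (ii) and (iv) make \<sqcup> the lattice join on every principal down-set \<down>d,
  and distributivity makes each \<down>d a distributive lattice.  Associativity makes
  a \<sqcup> _ monotone, and together with (iii) it shows that a \<preceq> s \<preceq> a \<sqcup> b implies
  s = a \<sqcup> (b \<inter> s).  For t = (a \<sqcup> b) \<inter> (a \<sqcup> c) this rewrites t as
  (a \<sqcup> (b \<inter> t)) \<inter> (a \<sqcup> (c \<inter> t)), a computation inside the distributive lattice \<down>t,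
  which yields t \<preceq> a \<sqcup> (b \<inter> c); the reverse inequality is monotonicity.
*)

locale o_sl =
  fixes meet join :: "'a \<Rightarrow> 'a \<Rightarrow> 'a"
  assumes o_semilattice: "o_semilattice meet join"
begin

abbreviation le :: "'a \<Rightarrow> 'a \<Rightarrow> bool"  (infix \<open>\<preceq>\<close> 50)
  where "x \<preceq> y \<equiv> sl_le meet x y"

sublocale meet: semilattice_order meet le "\<lambda>x y. x \<preceq> y \<and> x \<noteq> y"
  using o_semilattice
  by unfold_locales (auto simp: o_semilattice_def is_semilattice_def sl_le_def)

lemma join_upper1: "x \<preceq> join x y"
  using o_semilattice unfolding o_semilattice_def by blast

lemma join_least: "x \<preceq> d \<Longrightarrow> y \<preceq> d \<Longrightarrow> join x y \<preceq> d"
  using o_semilattice meet.absorb1 meet.absorb2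
  unfolding o_semilattice_def by metis

lemma join_upper2_bounded: "x \<preceq> d \<Longrightarrow> y \<preceq> d \<Longrightarrow> y \<preceq> join x y"
  using o_semilattice meet.absorb1 meet.absorb2
  unfolding o_semilattice_def by metis

lemma join_absorb1: "y \<preceq> x \<Longrightarrow> join x y = x"
  by (rule meet.antisym) (simp_all add: join_least join_upper1 meet.refl)

lemma join_absorb2: "x \<preceq> y \<Longrightarrow> join x y = y"
  by (rule meet.antisym) (simp_all add: join_least join_upper2_bounded meet.refl)

lemma join_idem: "join x x = x"
  by (simp add: join_absorb1 meet.refl)

lemma join_commute_bounded: "x \<preceq> d \<Longrightarrow> y \<preceq> d \<Longrightarrow> join x y = join y x"
  by (meson join_least join_upper1 join_upper2_bounded meet.antisym)

lemma join_meet_join_ge: "join x y \<preceq> join x (meet y (join x y))"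
  using o_semilattice unfolding o_semilattice_def by blast

end

locale distrib_o_sl = o_sl +
  assumes distrib: "distributive_o_semilattice meet join"
begin

lemma join_meet_distrib_bounded:
  assumes "a \<preceq> d" "b \<preceq> d" "c \<preceq> d"
  shows "join a (meet b c) = meet (join a b) (join a c)"
  using distrib assms meet.absorb1 unfolding distributive_o_semilattice_def by metis

lemma meet_join_distrib_bounded:
  assumes t: "t \<preceq> d" and x: "x \<preceq> d" and y: "y \<preceq> d"
  shows "meet t (join x y) = join (meet t x) (meet t y)"
proof -
  have tx: "meet t x \<preceq> d"
    using t by (rule meet.coboundedI1)
  have "join (meet t x) (meet t y) = meet (join (meet t x) t) (join (meet t x) y)"
    using join_meet_distrib_bounded[OF tx t y] meet.absorb1 by simp
  also have "join (meet t x) t = t"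
    by (simp add: join_absorb2)
  also have "join (meet t x) y = join y (meet t x)"
    using join_commute_bounded tx y by blast
  also have "\<dots> = meet (join y t) (join y x)"
    using join_meet_distrib_bounded[OF y t x] .
  also have "meet t (meet (join y t) (join y x)) = meet t (join y x)"
    using join_commute_bounded[OF y t] join_upper1 meet.absorb1 meet.assoc by metis
  also have "join y x = join x y"
    using join_commute_bounded x y by blast
  finally show ?thesis by simp
qed

end

locale ado_sl = distrib_o_sl +
  assumes join_assoc: "join (join x y) z = join x (join y z)"
begin

lemma join_mono_right: "y \<preceq> y' \<Longrightarrow> join a y \<preceq> join a y'"
  \<comment> \<open>join a y' = join (join a y) y'\<close>
  by (metis join_absorb2 join_assoc join_upper1)

lemma join_meet_join: "join x (meet y (join x y)) = join x y"
  by (simp add: join_meet_join_ge join_mono_right meet.antisym)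

lemma join_meet_eq_if_between:
  assumes as: "a \<preceq> s" and sab: "s \<preceq> join a b"
  shows "join a (meet b s) = s"
proof -
  let ?u = "join a b"
  have "s = meet s (join a (meet b ?u))"
    using sab meet.absorb1 join_meet_join by simp
  also have "\<dots> = join (meet s a) (meet s (meet b ?u))"
    using meet_join_distrib_bounded[OF sab join_upper1] by simp
  also have "\<dots> = join a (meet b s)"
    using as sab meet.absorb1 meet.absorb2 meet.assoc meet.commute by metis
  finally show ?thesis by simp
qed

theorem join_meet_distrib: "join a (meet b c) = meet (join a b) (join a c)"
proof -
  let ?t = "meet (join a b) (join a c)"
  have at: "a \<preceq> ?t" and tb: "?t \<preceq> join a b" and tc: "?t \<preceq> join a c"
    by (simp_all add: join_upper1)
  have "?t = meet (join a (meet b ?t)) (join a (meet c ?t))"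
    using join_meet_eq_if_between[OF at tb] join_meet_eq_if_between[OF at tc] by simp
  also have "\<dots> = join a (meet (meet b ?t) (meet c ?t))"
    using join_meet_distrib_bounded[OF at meet.cobounded2 meet.cobounded2] by simp
  also have "\<dots> \<preceq> join a (meet b c)"
    by (intro join_mono_right meet.mono) simp_all
  finally have "?t \<preceq> join a (meet b c)" .
  moreover have "join a (meet b c) \<preceq> ?t"
    by (simp add: join_mono_right)
  ultimately show ?thesis by (simp add: meet.antisym)
qed

theorem left_regular_band_join: "left_regular_band join"
  unfolding left_regular_band_def
  using join_assoc join_idem join_absorb1[OF join_upper1] by simp

end

theorem lemma3p2:
  fixes meet join :: "'a \<Rightarrow> 'a \<Rightarrow> 'a"
  assumes "ado_semilattice meet join"
  shows "left_regular_band join \<and>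
         (\<forall>a b c. join a (meet b c) = meet (join a b) (join a c))"
proof -
  interpret ado_sl meet join
    using assms by unfold_locales
      (auto simp: ado_semilattice_def distributive_o_semilattice_def)
  show ?thesis
    using left_regular_band_join join_meet_distrib by blast
qed

end
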